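(* Let $G=(V_G,E_G)$ be a finite graph whose automorphism group acts vertex-transitively on $V_G$. Then for every real vector $\vec J=(J_\alpha)_{\alpha\in V_G}$, the optimum of the graph semi-definite program for $H$ is at most $$-\Bigl(\sum_\alpha |J_\alpha|\Bigr)\,|V_G|^{-1/2}\sqrt{\vartheta(G)}.$$
   Context: Let $G=(V_G,E_G)$ be a finite graph; rows and columns of the matrices below are indexed by $V_G$. For a real vector $\vec J$, the "graph semi-definite program for $H$" is: minimize $(\vec J,v)=\sum_\alpha J_\alpha v_\alpha$ over real vectors $v$ and real symmetric matrices $M$, subject to: - $M_{\alpha,\alpha}=1$ for all $\alpha$; - $M_{\alpha,\beta}=0$ whenever $(\alpha,\beta)\in E_G$; - the block matrix $N=\begin{pmatrix}1 & v^T\\ v & M\end{pmatrix}$ is positive semi-definite. $\vartheta(G)$ denotes the Lovász theta function: the maximum of the sum of all entries of a real symmetric positive semi-definite matrix $B$ with $\mathrm{tr}\,B=1$ and $B_{\alpha,\beta}=0$ whenever $(\alpha,\beta)\in E_G$. *)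

theory Defs
  imports "HOL-Analysis.Analysis"
begin

text \<open>Graphs: vertex set is a finite type 'a, edges a symmetric irreflexive relation E.\<close>

definition graph_aut :: "('a \<Rightarrow> 'a \<Rightarrow> bool) \<Rightarrow> ('a \<Rightarrow> 'a) \<Rightarrow> bool" where
  "graph_aut E \<sigma> \<longleftrightarrow> bij \<sigma> \<and> (\<forall>x y. E (\<sigma> x) (\<sigma> y) \<longleftrightarrow> E x y)"

definition vertex_transitive :: "('a \<Rightarrow> 'a \<Rightarrow> bool) \<Rightarrow> bool" where
  "vertex_transitive E \<longleftrightarrow> (\<forall>x y. \<exists>\<sigma>. graph_aut E \<sigma> \<and> \<sigma> x = y)"

definition psd :: "real^'n^'n \<Rightarrow> bool" where
  "psd A \<longleftrightarrow> transpose A = A \<and> (\<forall>x. 0 \<le> x \<bullet> (A *v x))"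

text \<open>The block matrix N = [[1, v^T],[v, M]], indexed by None (the extra row/column) and Some a.\<close>
definition block_mat :: "real^'a \<Rightarrow> real^'a^'a \<Rightarrow> real^('a option)^('a option)" where
  "block_mat v M = (\<chi> i j. (case i of
       None \<Rightarrow> (case j of None \<Rightarrow> 1 | Some b \<Rightarrow> v $ b)
     | Some a \<Rightarrow> (case j of None \<Rightarrow> v $ a | Some b \<Rightarrow> M $ a $ b)))"

definition sdp_feasible :: "('a \<Rightarrow> 'a \<Rightarrow> bool) \<Rightarrow> real^'a \<Rightarrow> real^'a^'a \<Rightarrow> bool" where
  "sdp_feasible E v M \<longleftrightarrow> transpose M = M \<and> (\<forall>a. M $ a $ a = 1)
     \<and> (\<forall>a b. E a b \<longrightarrow> M $ a $ b = 0) \<and> psd (block_mat v M)"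

definition sdp_opt :: "('a::finite \<Rightarrow> 'a \<Rightarrow> bool) \<Rightarrow> real^'a \<Rightarrow> real" where
  "sdp_opt E J = Inf {(\<Sum>a\<in>UNIV. J $ a * v $ a) | v M. sdp_feasible E v M}"

definition lovasz_theta :: "('a::finite \<Rightarrow> 'a \<Rightarrow> bool) \<Rightarrow> real" where
  "lovasz_theta E = Sup {(\<Sum>a\<in>UNIV. \<Sum>b\<in>UNIV. B $ a $ b) | B.
      psd B \<and> (\<Sum>a\<in>UNIV. B $ a $ a) = 1 \<and> (\<forall>a b. E a b \<longrightarrow> B $ a $ b = 0)}"

end

theory Submission imports Defs begin

text \<open>Let \<open>B\<close> be feasible for \<open>\<vartheta>(G)\<close> with entry sum \<open>s\<close>. Averaging \<open>B\<close> over the automorphism group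
  and rescaling yields, by vertex transitivity, a PSD matrix \<open>M\<close> with unit diagonal, zeros on
  the edges and all row sums equal to \<open>s\<close>. The all-ones vector is then an eigenvector
  with eigenvalue \<open>s\<close>, so \<open>z\<^sup>T M z \<ge> (s/n) (\<Sum>z)\<^sup>2\<close>; hence, with \<open>d\<close> the sign vector of \<open>J\<close>,
  the point \<open>(v, DMD)\<close> with \<open>v = -sqrt (s/n) d\<close> is feasible by a Schur-complement argument and has value
  \<open>-(\<Sum>|J|) sqrt (s/n)\<close>. Letting \<open>s\<close> approach \<open>\<vartheta>(G)\<close> gives the bound.\<close>

lemma sum_UNIV_option:
  "(\<Sum>i\<in>(UNIV::'a::finite option set). f i) = f None + (\<Sum>a\<in>UNIV. f (Some a))"
  by (simp add: UNIV_option_conv sum.reindex)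

lemma sum_UNIV_bij_comp: "bij \<sigma> \<Longrightarrow> (\<Sum>a\<in>UNIV. f (\<sigma> a)) = (\<Sum>a\<in>UNIV. f a)"
  by (rule sum.reindex_bij_betw)

lemma sum_sum_swap_inner:
  "(\<Sum>a\<in>A. \<Sum>b\<in>B. \<Sum>c\<in>C. f a b c) = (\<Sum>c\<in>C. \<Sum>a\<in>A. \<Sum>b\<in>B. f a b c)"
  by (simp add: sum.swap[of _ B C] sum.swap[of _ A C])

lemma sum_UNIV_eq_card_mult:
  fixes f :: "'a::finite \<Rightarrow> 'b::semiring_1"
  assumes "\<And>a. f a = f b"
  shows "(\<Sum>a\<in>UNIV. f a) = of_nat CARD('a) * f b"
  using assms by (simp add: sum.cong[of UNIV UNIV f "\<lambda>_. f b"])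

definition quad_form :: "real^'n^'n \<Rightarrow> real^'n \<Rightarrow> real" where
  "quad_form A x = (\<Sum>i\<in>UNIV. \<Sum>j\<in>UNIV. x$i * A$i$j * x$j)"

lemma inner_matrix_vector_mult_eq_quad_form: "x \<bullet> (A *v x) = quad_form A x"
  by (simp add: quad_form_def inner_vec_def matrix_vector_mult_def sum_distrib_left
      mult.assoc mult.left_commute)

lemma psd_iff_quad_form: "psd A \<longleftrightarrow> transpose A = A \<and> (\<forall>x. 0 \<le> quad_form A x)"
  by (simp add: psd_def inner_matrix_vector_mult_eq_quad_form)

lemma entry_sum_nonneg_if_psd:
  assumes "psd B"
  shows "0 \<le> (\<Sum>a\<in>UNIV. \<Sum>b\<in>UNIV. B$a$b)"
proof -
  have "0 \<le> quad_form B (\<chi> a. 1)" using assms by (simp add: psd_iff_quad_form)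
  thus ?thesis by (simp add: quad_form_def)
qed

lemma quad_form_block_mat:
  "quad_form (block_mat v M) x
     = (x$None)\<^sup>2 + 2 * x$None * (\<Sum>a\<in>UNIV. v$a * x$Some a) + quad_form M (\<chi> a. x$Some a)"
  by (simp add: quad_form_def sum_UNIV_option block_mat_def sum.distrib sum_distrib_left
      power2_eq_square algebra_simps)

text \<open>A sufficient Schur-complement condition: completing the square in the extra coordinate.\<close>
lemma psd_block_mat_if_square_le:
  assumes "transpose M = M" and "\<And>y. (\<Sum>a\<in>UNIV. v$a * y$a)\<^sup>2 \<le> quad_form M y"
  shows "psd (block_mat v M)"
proof -
  have "transpose (block_mat v M) = block_mat v M"
    using assms(1) by (auto simp: vec_eq_iff transpose_def block_mat_def split: option.splits)
  moreover have "0 \<le> quad_form (block_mat v M) x" for x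
  proof -
    define t where "t = x$None"
    define u where "u = (\<Sum>a\<in>UNIV. v$a * x$Some a)"
    have "u\<^sup>2 \<le> quad_form M (\<chi> a. x$Some a)"
      using assms(2)[of "\<chi> a. x$Some a"] by (simp add: u_def)
    hence "(t + u)\<^sup>2 \<le> quad_form (block_mat v M) x"
      by (simp add: quad_form_block_mat t_def u_def power2_eq_square algebra_simps)
    thus ?thesis by (meson order_trans zero_le_power2)
  qed
  ultimately show ?thesis by (simp add: psd_iff_quad_form)
qed

text \<open>Testing \<open>block_mat v M\<close> against \<open>(1, -v_a e_a)\<close> gives \<open>1 - v_a\<^sup>2 \<ge> 0\<close>.\<close>
lemma sdp_feasible_abs_le_1:
  assumes "sdp_feasible E v M"
  shows "\<bar>v$a\<bar> \<le> 1"
proof -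
  define x where "x = (\<chi> i. if i = None then 1 else if i = Some a then - v$a else 0 :: real^('a option))"
  have "psd (block_mat v M)" and "M$a$a = 1" using assms by (auto simp: sdp_feasible_def)
  hence "0 \<le> quad_form (block_mat v M) x" by (simp add: psd_iff_quad_form)
  also have "quad_form (block_mat v M) x = 1 - (v$a)\<^sup>2"
    unfolding quad_form_block_mat
    by (simp add: x_def \<open>M$a$a = 1\<close> quad_form_def if_distrib[of "\<lambda>t. _ * t"]
        if_distrib[of "\<lambda>t. t * _"] if_distrib[of uminus] power2_eq_square cong: if_cong)
  finally show ?thesis by (simp add: abs_square_le_1)
qed

lemma sdp_opt_le:
  assumes "sdp_feasible E v M"
  shows "sdp_opt E J \<le> (\<Sum>a\<in>UNIV. J$a * v$a)"
  unfolding sdp_opt_def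
proof (rule cInf_lower)
  show "(\<Sum>a\<in>UNIV. J$a * v$a) \<in> {\<Sum>a\<in>UNIV. J$a * v$a |v M. sdp_feasible E v M}"
    using assms by blast
  have "- (\<Sum>a\<in>UNIV. \<bar>J$a\<bar>) \<le> (\<Sum>a\<in>UNIV. J$a * v'$a)" if "sdp_feasible E v' M'" for v' M'
  proof -
    have "\<bar>J$a * v'$a\<bar> \<le> \<bar>J$a\<bar>" for a
      using sdp_feasible_abs_le_1[OF that, of a] by (simp add: abs_mult mult_left_le)
    hence "- \<bar>J$a\<bar> \<le> J$a * v'$a" for a
      by (metis abs_le_D2 minus_le_iff)
    thus ?thesis by (simp add: sum_negf[symmetric] sum_mono)
  qed
  thus "bdd_below {\<Sum>a\<in>UNIV. J$a * v$a |v M. sdp_feasible E v M}"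
    by (intro bdd_belowI[of _ "- (\<Sum>a\<in>UNIV. \<bar>J$a\<bar>)"]) blast
qed

text \<open>Split \<open>z = t\<one> + w\<close> with \<open>t\<close> the mean of \<open>z\<close>: as \<open>\<one>\<close> is an eigenvector of \<open>M\<close> with
  eigenvalue \<open>r\<close>, the cross terms cancel and \<open>quad_form M z = r n t\<^sup>2 + quad_form M w\<close>.\<close>
lemma quad_form_ge_const_row_sums:
  fixes M :: "real^'a::finite^'a"
  assumes psd: "\<And>x. 0 \<le> quad_form M x"
    and rows: "\<And>a. (\<Sum>b\<in>UNIV. M$a$b) = r" and cols: "\<And>b. (\<Sum>a\<in>UNIV. M$a$b) = r"
  shows "r / CARD('a) * (\<Sum>a\<in>UNIV. z$a)\<^sup>2 \<le> quad_form M z"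
proof -
  define S where "S = (\<Sum>a\<in>UNIV. z$a)"
  define n where "n = real CARD('a)"
  define t where "t = S / n"
  define w where "w = (\<chi> a. z$a - t :: real^'a)"
  have swap: "(\<Sum>a\<in>UNIV. \<Sum>b\<in>UNIV. z$b * M$a$b) = (\<Sum>b\<in>UNIV. z$b * (\<Sum>a\<in>UNIV. M$a$b))"
    by (simp add: sum_distrib_left sum.swap[of "\<lambda>a b. z$b * M$a$b"])
  have "quad_form M w = quad_form M z - t * (\<Sum>a\<in>UNIV. \<Sum>b\<in>UNIV. z$a * M$a$b)
      - t * (\<Sum>a\<in>UNIV. \<Sum>b\<in>UNIV. z$b * M$a$b) + t\<^sup>2 * (\<Sum>a\<in>UNIV. \<Sum>b\<in>UNIV. M$a$b)"
    unfolding quad_form_def w_def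
    by (simp add: algebra_simps power2_eq_square sum.distrib sum_subtractf sum_distrib_left)
  also have "\<dots> = quad_form M z - 2 * t * S * r + t\<^sup>2 * (n * r)"
    by (simp add: swap rows cols S_def n_def sum_distrib_right flip: sum_distrib_left)
  also have "\<dots> = quad_form M z - r / n * S\<^sup>2"
    unfolding t_def by (simp add: n_def field_simps power2_eq_square)
  finally show ?thesis using psd[of w] by (simp add: S_def n_def)
qed

lemma sdp_feasible_of_const_row_sums:
  fixes M :: "real^'a::finite^'a" and J :: "real^'a"
  assumes sym: "transpose M = M" and psd: "\<And>x. 0 \<le> quad_form M x"
    and diag: "\<And>a. M$a$a = 1" and edges: "\<And>a b. E a b \<Longrightarrow> M$a$b = 0"
    and rows: "\<And>a. (\<Sum>b\<in>UNIV. M$a$b) = s" and "0 \<le> s"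
  obtains v M' where "sdp_feasible E v M'"
    and "(\<Sum>a\<in>UNIV. J$a * v$a) = - (\<Sum>a\<in>UNIV. \<bar>J$a\<bar>) * sqrt (s / CARD('a))"
proof -
  define d where "d a = (if 0 \<le> J$a then 1 else - 1 :: real)" for a
  define c where "c = sqrt (s / CARD('a))"
  define v where "v = (\<chi> a. - c * d a :: real^'a)"
  define M' where "M' = (\<chi> a b. d a * d b * M$a$b :: real^'a^'a)"
  have d_sq: "d a * d a = 1" for a by (simp add: d_def)
  have abs_J: "J$a * d a = \<bar>J$a\<bar>" for a by (simp add: d_def)
  have sym_entries: "M$a$b = M$b$a" for a b
    using sym by (metis transpose_def vec_lambda_beta)
  have sym': "transpose M' = M'"
    by (simp add: M'_def transpose_def vec_eq_iff sym_entries mult.commute)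
  have cols: "(\<Sum>a\<in>UNIV. M$a$b) = s" for b
    using rows[of b] by (simp add: sym_entries)
  have "(\<Sum>a\<in>UNIV. v$a * y$a)\<^sup>2 \<le> quad_form M' y" for y
  proof -
    define z where "z = (\<chi> a. d a * y$a :: real^'a)"
    have "(\<Sum>a\<in>UNIV. v$a * y$a)\<^sup>2 = c\<^sup>2 * (\<Sum>a\<in>UNIV. z$a)\<^sup>2"
      by (simp add: v_def z_def sum_negf mult.assoc power_mult_distrib flip: sum_distrib_left)
    also have "\<dots> \<le> quad_form M z"
      using quad_form_ge_const_row_sums[OF psd rows cols, of z] \<open>0 \<le> s\<close> by (simp add: c_def)
    also have "\<dots> = quad_form M' y"
      by (simp add: quad_form_def M'_def z_def algebra_simps)
    finally show ?thesis .
  qed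
  hence "sdp_feasible E v M'"
    using sym' by (simp add: sdp_feasible_def psd_block_mat_if_square_le) (simp add: M'_def diag d_sq edges)
  moreover have "(\<Sum>a\<in>UNIV. J$a * v$a) = - (\<Sum>a\<in>UNIV. \<bar>J$a\<bar>) * c"
    by (simp add: v_def abs_J[symmetric] sum_distrib_left sum_distrib_right sum_negf algebra_simps)
  ultimately show ?thesis using that unfolding c_def by blast
qed

definition graph_auts :: "('a \<Rightarrow> 'a \<Rightarrow> bool) \<Rightarrow> ('a \<Rightarrow> 'a) set" where
  "graph_auts E = {\<sigma>. graph_aut E \<sigma>}"

definition aut_sum :: "('a::finite \<Rightarrow> 'a \<Rightarrow> bool) \<Rightarrow> real^'a^'a \<Rightarrow> real^'a^'a" where
  "aut_sum E B = (\<chi> a b. \<Sum>\<sigma>\<in>graph_auts E. B$(\<sigma> a)$(\<sigma> b))"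

lemma id_in_graph_auts: "id \<in> graph_auts E"
  by (simp add: graph_auts_def graph_aut_def)

lemma bij_if_in_graph_auts: "\<sigma> \<in> graph_auts E \<Longrightarrow> bij \<sigma>"
  by (simp add: graph_auts_def graph_aut_def)

lemma comp_in_graph_auts: "\<sigma> \<in> graph_auts E \<Longrightarrow> \<tau> \<in> graph_auts E \<Longrightarrow> \<sigma> \<circ> \<tau> \<in> graph_auts E"
  by (simp add: graph_auts_def graph_aut_def bij_comp)

lemma inv_in_graph_auts:
  assumes "\<tau> \<in> graph_auts E"
  shows "inv \<tau> \<in> graph_auts E"
proof -
  have "bij \<tau>" and E_\<tau>: "\<And>x y. E (\<tau> x) (\<tau> y) \<longleftrightarrow> E x y"
    using assms by (auto simp: graph_auts_def graph_aut_def)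
  hence "E (inv \<tau> x) (inv \<tau> y) \<longleftrightarrow> E x y" for x y
    using E_\<tau>[of "inv \<tau> x" "inv \<tau> y"] by (simp add: bij_is_surj surj_f_inv_f)
  thus ?thesis using bij_imp_bij_inv[OF \<open>bij \<tau>\<close>] by (simp add: graph_auts_def graph_aut_def)
qed

lemma card_graph_auts_pos: "0 < card (graph_auts (E :: 'a::finite \<Rightarrow> 'a \<Rightarrow> bool))"
  using id_in_graph_auts[of E] by (simp add: card_gt_0_iff) blast

lemma aut_sum_aut_invariant:
  assumes "\<tau> \<in> graph_auts E"
  shows "aut_sum E B $ \<tau> a $ \<tau> b = aut_sum E B $ a $ b"
proof -
  have "bij \<tau>" using assms by (rule bij_if_in_graph_auts)
  have "bij_betw (\<lambda>\<sigma>. \<sigma> \<circ> \<tau>) (graph_auts E) (graph_auts E)"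
  proof (rule bij_betw_byWitness[where f'="\<lambda>\<sigma>. \<sigma> \<circ> inv \<tau>"])
    show "\<forall>\<sigma>\<in>graph_auts E. \<sigma> \<circ> \<tau> \<circ> inv \<tau> = \<sigma>"
      using \<open>bij \<tau>\<close> by (simp add: fun_eq_iff bij_is_surj surj_f_inv_f)
    show "\<forall>\<sigma>\<in>graph_auts E. \<sigma> \<circ> inv \<tau> \<circ> \<tau> = \<sigma>"
      using \<open>bij \<tau>\<close> by (simp add: fun_eq_iff bij_is_inj inv_f_f)
    show "(\<lambda>\<sigma>. \<sigma> \<circ> \<tau>) ` graph_auts E \<subseteq> graph_auts E"
      using assms by (auto intro: comp_in_graph_auts)
    show "(\<lambda>\<sigma>. \<sigma> \<circ> inv \<tau>) ` graph_auts E \<subseteq> graph_auts E"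
      using assms by (auto intro: comp_in_graph_auts inv_in_graph_auts)
  qed
  from sum.reindex_bij_betw[OF this, of "\<lambda>\<sigma>. B$(\<sigma> a)$(\<sigma> b)"] show ?thesis
    by (simp add: aut_sum_def)
qed

lemma quad_form_permute:
  fixes B :: "real^'a::finite^'a"
  assumes "bij \<sigma>"
  shows "quad_form (\<chi> a b. B$(\<sigma> a)$(\<sigma> b)) x = quad_form B (\<chi> i. x$(inv \<sigma> i))"
proof -
  define y where "y = (\<chi> i. x$(inv \<sigma> i) :: real^'a)"
  have x_eq: "x$a = y$(\<sigma> a)" for a
    using assms by (simp add: y_def bij_is_inj)
  have "quad_form (\<chi> a b. B$(\<sigma> a)$(\<sigma> b)) x
      = (\<Sum>a\<in>UNIV. \<Sum>b\<in>UNIV. y$(\<sigma> a) * B$(\<sigma> a)$(\<sigma> b) * y$(\<sigma> b))"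
    by (simp add: quad_form_def x_eq)
  also have "\<dots> = quad_form B y"
    unfolding quad_form_def
    using sum_UNIV_bij_comp[OF assms, of "\<lambda>a. \<Sum>b\<in>UNIV. y$a * B$a$(\<sigma> b) * y$(\<sigma> b)"]
      sum_UNIV_bij_comp[OF assms, of "\<lambda>b. y$_ * B$_$b * y$b"]
    by simp
  finally show ?thesis by (simp add: y_def)
qed

lemma quad_form_aut_sum_nonneg:
  assumes "\<And>y. 0 \<le> quad_form B y"
  shows "0 \<le> quad_form (aut_sum E B) x"
proof -
  have "quad_form (aut_sum E B) x
      = (\<Sum>a\<in>UNIV. \<Sum>b\<in>UNIV. \<Sum>\<sigma>\<in>graph_auts E. x$a * B$(\<sigma> a)$(\<sigma> b) * x$b)"
    by (simp add: quad_form_def aut_sum_def sum_distrib_left sum_distrib_right)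
  also have "\<dots> = (\<Sum>\<sigma>\<in>graph_auts E. quad_form (\<chi> a b. B$(\<sigma> a)$(\<sigma> b)) x)"
    by (subst sum_sum_swap_inner) (simp add: quad_form_def)
  also have "\<dots> \<ge> 0"
    by (intro sum_nonneg) (simp add: quad_form_permute bij_if_in_graph_auts assms)
  finally show ?thesis .
qed

lemma trace_aut_sum:
  "(\<Sum>a\<in>UNIV. aut_sum E B $ a $ a) = card (graph_auts E) * (\<Sum>a\<in>UNIV. B$a$a)"
proof -
  have "(\<Sum>a\<in>UNIV. aut_sum E B $ a $ a) = (\<Sum>\<sigma>\<in>graph_auts E. \<Sum>a\<in>UNIV. B$(\<sigma> a)$(\<sigma> a))"
    unfolding aut_sum_def by (simp add: sum.swap[of _ UNIV "graph_auts E"])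
  also have "\<dots> = (\<Sum>\<sigma>\<in>graph_auts E. \<Sum>a\<in>UNIV. B$a$a)"
    by (intro sum.cong refl sum_UNIV_bij_comp[of _ "\<lambda>a. B$a$a"] bij_if_in_graph_auts)
  finally show ?thesis by simp
qed

lemma entry_sum_aut_sum:
  "(\<Sum>a\<in>UNIV. \<Sum>b\<in>UNIV. aut_sum E B $ a $ b) = card (graph_auts E) * (\<Sum>a\<in>UNIV. \<Sum>b\<in>UNIV. B$a$b)"
proof -
  have "(\<Sum>a\<in>UNIV. \<Sum>b\<in>UNIV. aut_sum E B $ a $ b)
      = (\<Sum>\<sigma>\<in>graph_auts E. \<Sum>a\<in>UNIV. \<Sum>b\<in>UNIV. B$(\<sigma> a)$(\<sigma> b))"
    by (simp add: aut_sum_def sum_sum_swap_inner[of "\<lambda>a b \<sigma>. B$(\<sigma> a)$(\<sigma> b)"])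
  also have "\<dots> = (\<Sum>\<sigma>\<in>graph_auts E. \<Sum>a\<in>UNIV. \<Sum>b\<in>UNIV. B$a$b)"
  proof (rule sum.cong[OF refl])
    fix \<sigma> assume "\<sigma> \<in> graph_auts E"
    hence "bij \<sigma>" by (rule bij_if_in_graph_auts)
    show "(\<Sum>a\<in>UNIV. \<Sum>b\<in>UNIV. B$(\<sigma> a)$(\<sigma> b)) = (\<Sum>a\<in>UNIV. \<Sum>b\<in>UNIV. B$a$b)"
      using sum_UNIV_bij_comp[OF \<open>bij \<sigma>\<close>, of "\<lambda>a. \<Sum>b\<in>UNIV. B$a$(\<sigma> b)"]
        sum_UNIV_bij_comp[OF \<open>bij \<sigma>\<close>, of "\<lambda>b. B$_$b"] by simp
  qed
  finally show ?thesis by simp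
qed

lemma aut_sum_diag_const:
  assumes "vertex_transitive E"
  shows "aut_sum E B $ a $ a = aut_sum E B $ b $ b"
proof -
  obtain \<tau> where "\<tau> \<in> graph_auts E" "\<tau> b = a"
    using assms by (auto simp: vertex_transitive_def graph_auts_def)
  thus ?thesis using aut_sum_aut_invariant by metis
qed

lemma aut_sum_row_sum_const:
  assumes "vertex_transitive E"
  shows "(\<Sum>c\<in>UNIV. aut_sum E B $ a $ c) = (\<Sum>c\<in>UNIV. aut_sum E B $ b $ c)"
proof -
  obtain \<tau> where \<tau>: "\<tau> \<in> graph_auts E" "\<tau> b = a"
    using assms by (auto simp: vertex_transitive_def graph_auts_def)
  have "(\<Sum>c\<in>UNIV. aut_sum E B $ a $ c) = (\<Sum>c\<in>UNIV. aut_sum E B $ \<tau> b $ \<tau> c)"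
    using sum_UNIV_bij_comp[OF bij_if_in_graph_auts[OF \<tau>(1)], of "\<lambda>c. aut_sum E B $ a $ c"] \<tau>(2)
    by simp
  also have "\<dots> = (\<Sum>c\<in>UNIV. aut_sum E B $ b $ c)"
    by (simp add: aut_sum_aut_invariant[OF \<tau>(1)])
  finally show ?thesis .
qed

lemma vertex_transitive_regularize:
  fixes B :: "real^'a::finite^'a"
  assumes vt: "vertex_transitive E" and "psd B" and trace: "(\<Sum>a\<in>UNIV. B$a$a) = 1"
    and edges: "\<And>a b. E a b \<Longrightarrow> B$a$b = 0"
  obtains M :: "real^'a^'a" where "transpose M = M" and "\<And>x. 0 \<le> quad_form M x"
    and "\<And>a. M$a$a = 1" and "\<And>a b. E a b \<Longrightarrow> M$a$b = 0"
    and "\<And>a. (\<Sum>b\<in>UNIV. M$a$b) = (\<Sum>a\<in>UNIV. \<Sum>b\<in>UNIV. B$a$b)"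
proof -
  define m where "m = real (card (graph_auts E))"
  define n where "n = real CARD('a)"
  define M where "M = (\<chi> a b. n / m * aut_sum E B $ a $ b)"
  have "m > 0" "n > 0" using card_graph_auts_pos by (auto simp: m_def n_def)
  have sym: "transpose B = B" and psd: "\<And>x. 0 \<le> quad_form B x"
    using \<open>psd B\<close> by (auto simp: psd_iff_quad_form)
  have "transpose M = M"
    using sym by (simp add: M_def aut_sum_def transpose_def vec_eq_iff)
  moreover have "0 \<le> quad_form M x" for x
  proof -
    have "quad_form M x = n / m * quad_form (aut_sum E B) x"
      by (simp add: M_def quad_form_def sum_distrib_left algebra_simps)
    thus ?thesis using quad_form_aut_sum_nonneg[OF psd] \<open>m > 0\<close> \<open>n > 0\<close> by simp
  qed
  moreover have "M$a$a = 1" for a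
  proof -
    have "n * aut_sum E B $ a $ a = m"
      using trace_aut_sum[of E B] trace aut_sum_diag_const[OF vt]
        sum_UNIV_eq_card_mult[of "\<lambda>c. aut_sum E B $ c $ c" a]
      by (simp add: m_def n_def)
    thus ?thesis using \<open>m > 0\<close> by (simp add: M_def)
  qed
  moreover have "E a b \<Longrightarrow> M$a$b = 0" for a b
    using edges by (auto simp: M_def aut_sum_def graph_auts_def graph_aut_def)
  moreover have "(\<Sum>b\<in>UNIV. M$a$b) = (\<Sum>a\<in>UNIV. \<Sum>b\<in>UNIV. B$a$b)" for a
  proof -
    have "n * (\<Sum>b\<in>UNIV. aut_sum E B $ a $ b) = m * (\<Sum>a\<in>UNIV. \<Sum>b\<in>UNIV. B$a$b)"
      using entry_sum_aut_sum[of E B] aut_sum_row_sum_const[OF vt]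
        sum_UNIV_eq_card_mult[of "\<lambda>c. \<Sum>b\<in>UNIV. aut_sum E B $ c $ b" a]
      by (simp add: m_def n_def)
    moreover have "(\<Sum>b\<in>UNIV. M$a$b) = n / m * (\<Sum>b\<in>UNIV. aut_sum E B $ a $ b)"
      by (simp add: M_def sum_distrib_left)
    ultimately show ?thesis using \<open>m > 0\<close> by (simp add: field_simps)
  qed
  ultimately show ?thesis using that by blast
qed

lemma sdp_opt_le_entry_sum:
  fixes B :: "real^'a::finite^'a"
  assumes "vertex_transitive E" and "psd B" and "(\<Sum>a\<in>UNIV. B$a$a) = 1"
    and "\<And>a b. E a b \<Longrightarrow> B$a$b = 0"
  shows "sdp_opt E J \<le> - (\<Sum>a\<in>UNIV. \<bar>J$a\<bar>) * sqrt ((\<Sum>a\<in>UNIV. \<Sum>b\<in>UNIV. B$a$b) / CARD('a))"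
proof -
  obtain M where "transpose M = M" "\<And>x. 0 \<le> quad_form M x" "\<And>a. M$a$a = 1"
    "\<And>a b. E a b \<Longrightarrow> M$a$b = 0" "\<And>a. (\<Sum>b\<in>UNIV. M$a$b) = (\<Sum>a\<in>UNIV. \<Sum>b\<in>UNIV. B$a$b)"
    using vertex_transitive_regularize[OF assms] by blast
  from sdp_feasible_of_const_row_sums[OF this entry_sum_nonneg_if_psd[OF \<open>psd B\<close>], where J = J]
  obtain v M' where "sdp_feasible E v M'"
    and "(\<Sum>a\<in>UNIV. J$a * v$a) = - (\<Sum>a\<in>UNIV. \<bar>J$a\<bar>) * sqrt ((\<Sum>a\<in>UNIV. \<Sum>b\<in>UNIV. B$a$b) / CARD('a))" .
  with sdp_opt_le show ?thesis by metis
qed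

lemma le_neg_mult_sqrt_Sup:
  fixes S :: "real set"
  assumes "S \<noteq> {}" and nonneg: "\<And>s. s \<in> S \<Longrightarrow> 0 \<le> s" and "0 \<le> K"
    and le: "\<And>s. s \<in> S \<Longrightarrow> X \<le> - K * sqrt s"
  shows "X \<le> - K * sqrt (Sup S)"
proof -
  obtain s0 where "s0 \<in> S" using \<open>S \<noteq> {}\<close> by blast
  have "0 \<le> K * sqrt s0" using nonneg[OF \<open>s0 \<in> S\<close>] \<open>0 \<le> K\<close> by simp
  hence "X \<le> 0" using le[OF \<open>s0 \<in> S\<close>] by linarith
  show ?thesis
  proof (cases "K = 0")
    case True
    with \<open>X \<le> 0\<close> show ?thesis by simp
  next
    case False
    hence "0 < K" using \<open>0 \<le> K\<close> by simp
    have "s \<le> (X / K)\<^sup>2" if "s \<in> S" for s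
    proof -
      have "sqrt s \<le> - X / K" using le[OF that] \<open>0 < K\<close> by (simp add: field_simps)
      hence "(sqrt s)\<^sup>2 \<le> (- X / K)\<^sup>2" using nonneg[OF that] by (intro power_mono) auto
      thus ?thesis using nonneg[OF that] by simp
    qed
    hence "sqrt (Sup S) \<le> \<bar>X / K\<bar>"
      using \<open>S \<noteq> {}\<close> by (metis cSup_least real_sqrt_abs real_sqrt_le_mono)
    with \<open>X \<le> 0\<close> \<open>0 < K\<close> have "sqrt (Sup S) \<le> - X / K" by (simp add: abs_div_pos)
    thus ?thesis using \<open>0 < K\<close> by (simp add: field_simps)
  qed
qed

theorem mainTheorem2:
  fixes E :: "'a::finite \<Rightarrow> 'a \<Rightarrow> bool" and J :: "real^'a"
  assumes "\<And>x y. E x y \<Longrightarrow> E y x"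
    and "\<And>x. \<not> E x x"
    and "vertex_transitive E"
  shows "sdp_opt E J \<le> - (\<Sum>a\<in>UNIV. \<bar>J $ a\<bar>) * (1 / sqrt (real CARD('a))) * sqrt (lovasz_theta E)"
proof -
  let ?T = "{\<Sum>a\<in>UNIV. \<Sum>b\<in>UNIV. B$a$b |B :: real^'a^'a.
      psd B \<and> (\<Sum>a\<in>UNIV. B$a$a) = 1 \<and> (\<forall>a b. E a b \<longrightarrow> B$a$b = 0)}"
  define B0 where "B0 = (\<chi> a b. if a = b then 1 / CARD('a) else 0 :: real^'a^'a)"
  have "psd B0"
    by (auto simp: psd_iff_quad_form B0_def transpose_def vec_eq_iff quad_form_def
        if_distrib[of "\<lambda>t. _ * t"] cong: if_cong intro!: sum_nonneg)
  moreover have "(\<Sum>a\<in>UNIV. B0$a$a) = 1" by (simp add: B0_def)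
  moreover have "E a b \<Longrightarrow> B0$a$b = 0" for a b using assms(2) by (auto simp: B0_def)
  ultimately have "?T \<noteq> {}" by blast
  hence "sdp_opt E J \<le> - ((\<Sum>a\<in>UNIV. \<bar>J$a\<bar>) * (1 / sqrt CARD('a))) * sqrt (Sup ?T)"
    using sdp_opt_le_entry_sum[OF assms(3)] entry_sum_nonneg_if_psd
    by (intro le_neg_mult_sqrt_Sup) (auto simp: real_sqrt_divide)
  thus ?thesis by (simp add: lovasz_theta_def)
qed

end
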